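(* Let $A$ be a metric space and let $a:\mathbb{R}^N\times A\to S^N$, $b:\mathbb{R}^N\times A\to\mathbb{R}^N$, $c:\mathbb{R}^N\times A\to\mathbb{R}$ be continuous. For $\alpha\in A$ set $L^\alpha u:=\mathrm{tr}(a(x,\alpha)D^2u)+b(x,\alpha)\cdot Du$ and $G[u]:=\inf_{\alpha\in A}\{-L^\alpha u+c(x,\alpha)u\}$. Assume: (i) $F(x,t,p,X)=\inf_{\alpha\in A}\{-\mathrm{tr}(a(x,\alpha)X)-b(x,\alpha)\cdot p+c(x,\alpha)t\}$ is continuous on $\mathbb{R}^N\times\mathbb{R}\times\mathbb{R}^N\times S^N$, $c\ge 0$, and $G$ satisfies the Comparison Principle in every bounded open set $\Omega$: if $u,v$ are respectively a viscosity subsolution and supersolution of $G[u]=0$ in $\Omega$ with $u\le v$ on $\partial\Omega$, then $u\le v$ in $\Omega$; (ii) $G$ satisfies the Strong Maximum Principle: any viscosity subsolution of $G[u]=0$ in $\mathbb{R}^N$ that attains an interior nonnegative maximum is constant; (iii) there exist $R_o\ge0$ and a lower semicontinuous $w:\mathbb{R}^N\to\mathbb{R}$ such that $G[w]\ge0$ in the viscosity sense in $\{|x|>R_o\}$ and $\lim_{|x|\to\infty}w(x)=+\infty$. Let $u\in USC(\mathbb{R}^N)$ satisfy $G[u]\le0$ in $\mathbb{R}^N$ in the viscosity sense and $\limsup_{|x|\to\infty}\frac{u(x)}{w(x)}\le 0$. If either $u\ge0$ or $c(x,\alpha)=0$ for all $x,\alpha$, then $u$ is constant.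
   Context: $S^N$ denotes the space of real symmetric $N\times N$ matrices. Sub- and supersolutions are meant in the viscosity sense. *)

theory Defs
  imports "HOL-Analysis.Analysis"
begin

definition symmetric_mat :: "real^'n^'n \<Rightarrow> bool" where
  "symmetric_mat X \<longleftrightarrow> transpose X = X"

definition usc_on :: "(real^'n) set \<Rightarrow> (real^'n \<Rightarrow> real) \<Rightarrow> bool" where
  "usc_on S u \<longleftrightarrow> (\<forall>x\<in>S. \<forall>e>0. eventually (\<lambda>y. u y < u x + e) (at x within S))"

definition lsc_on :: "(real^'n) set \<Rightarrow> (real^'n \<Rightarrow> real) \<Rightarrow> bool" where
  "lsc_on S u \<longleftrightarrow> (\<forall>x\<in>S. \<forall>e>0. eventually (\<lambda>y. u x - e < u y) (at x within S))"

definition C2_test :: "(real^'n \<Rightarrow> real) \<Rightarrow> (real^'n \<Rightarrow> real^'n) \<Rightarrow> (real^'n \<Rightarrow> real^'n^'n) \<Rightarrow> bool" where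
  "C2_test \<phi> D\<phi> D2\<phi> \<longleftrightarrow>
     (\<forall>x. (\<phi> has_derivative (\<lambda>h. D\<phi> x \<bullet> h)) (at x)) \<and>
     (\<forall>x. (D\<phi> has_derivative (\<lambda>h. D2\<phi> x *v h)) (at x)) \<and>
     continuous_on UNIV D2\<phi>"

definition Fop :: "(real^'n \<Rightarrow> 'a \<Rightarrow> real^'n^'n) \<Rightarrow> (real^'n \<Rightarrow> 'a \<Rightarrow> real^'n) \<Rightarrow> (real^'n \<Rightarrow> 'a \<Rightarrow> real)
                   \<Rightarrow> real^'n \<Rightarrow> real \<Rightarrow> real^'n \<Rightarrow> real^'n^'n \<Rightarrow> real" where
  "Fop a b c x t p X = (INF \<alpha>. - trace (a x \<alpha> ** X) - b x \<alpha> \<bullet> p + c x \<alpha> * t)"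

definition visc_sub :: "(real^'n \<Rightarrow> 'a \<Rightarrow> real^'n^'n) \<Rightarrow> (real^'n \<Rightarrow> 'a \<Rightarrow> real^'n) \<Rightarrow> (real^'n \<Rightarrow> 'a \<Rightarrow> real)
                        \<Rightarrow> (real^'n) set \<Rightarrow> (real^'n \<Rightarrow> real) \<Rightarrow> bool" where
  "visc_sub a b c \<Omega> u \<longleftrightarrow> usc_on \<Omega> u \<and>
     (\<forall>x0\<in>\<Omega>. \<forall>\<phi> D\<phi> D2\<phi>. C2_test \<phi> D\<phi> D2\<phi> \<and>
        (\<exists>r>0. \<forall>y\<in>\<Omega> \<inter> ball x0 r. u y - \<phi> y \<le> u x0 - \<phi> x0)
        \<longrightarrow> Fop a b c x0 (u x0) (D\<phi> x0) (D2\<phi> x0) \<le> 0)"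

definition visc_super :: "(real^'n \<Rightarrow> 'a \<Rightarrow> real^'n^'n) \<Rightarrow> (real^'n \<Rightarrow> 'a \<Rightarrow> real^'n) \<Rightarrow> (real^'n \<Rightarrow> 'a \<Rightarrow> real)
                        \<Rightarrow> (real^'n) set \<Rightarrow> (real^'n \<Rightarrow> real) \<Rightarrow> bool" where
  "visc_super a b c \<Omega> v \<longleftrightarrow> lsc_on \<Omega> v \<and>
     (\<forall>x0\<in>\<Omega>. \<forall>\<phi> D\<phi> D2\<phi>. C2_test \<phi> D\<phi> D2\<phi> \<and>
        (\<exists>r>0. \<forall>y\<in>\<Omega> \<inter> ball x0 r. v y - \<phi> y \<ge> v x0 - \<phi> x0)
        \<longrightarrow> Fop a b c x0 (v x0) (D\<phi> x0) (D2\<phi> x0) \<ge> 0)"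

end

theory Submission
  imports Defs
begin

text \<open>Let \<open>M\<close> be the maximum of \<open>u\<close> over a ball \<open>B\<^sub>R\<close>, \<open>R \<ge> R\<^sub>o\<close>, outside of which \<open>w > 0\<close>.
  Since \<open>c M \<ge> 0\<close> in both alternatives, \<open>M + \<epsilon> w\<close> is a supersolution outside \<open>B\<^sub>R\<close> for every
  \<open>\<epsilon> > 0\<close>; it dominates \<open>u\<close> on \<open>\<partial>B\<^sub>R\<close> and, by the growth condition, near infinity. Comparison
  on large annuli gives \<open>u \<le> M + \<epsilon> w\<close> outside \<open>B\<^sub>R\<close>, hence \<open>u \<le> M\<close> as \<open>\<epsilon> \<rightarrow> 0\<close>. So \<open>u\<close> attains
  its maximum, and the Strong Maximum Principle, applied to \<open>u\<close> or (when \<open>c = 0\<close>) to \<open>u - M\<close>,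
  makes it constant.\<close>

lemma usc_on_subset: "usc_on T u \<Longrightarrow> S \<subseteq> T \<Longrightarrow> usc_on S u"
  unfolding usc_on_def by (meson at_le filter_leD subsetD)

lemma lsc_on_subset: "lsc_on T u \<Longrightarrow> S \<subseteq> T \<Longrightarrow> lsc_on S u"
  unfolding lsc_on_def by (meson at_le filter_leD subsetD)

lemma lsc_on_affine:
  assumes "lsc_on S w" "\<epsilon> > 0"
  shows "lsc_on S (\<lambda>x. M + \<epsilon> * w x)"
  unfolding lsc_on_def
proof (intro ballI allI impI)
  fix x and d :: real
  assume "x \<in> S" "d > 0"
  then have "eventually (\<lambda>y. w x - d / \<epsilon> < w y) (at x within S)"
    using assms unfolding lsc_on_def by simp
  then show "eventually (\<lambda>y. M + \<epsilon> * w x - d < M + \<epsilon> * w y) (at x within S)"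
    by eventually_elim (use \<open>\<epsilon> > 0\<close> in \<open>simp add: field_simps\<close>)
qed

lemma usc_on_UNIV_closed_superlevel:
  assumes "usc_on UNIV u"
  shows "closed {x. t \<le> u x}"
proof -
  have ev: "eventually (\<lambda>y. u y < u z + e) (at z)" if "e > 0" for z e
    using assms that unfolding usc_on_def by simp
  have "\<exists>T. open T \<and> x \<in> T \<and> T \<subseteq> {x. u x < t}" if "u x < t" for x
  proof -
    have "eventually (\<lambda>y. u y < t) (at x)"
      using ev[of "t - u x" x] that by simp
    then obtain T where "open T" "x \<in> T" "\<forall>y\<in>T. y \<noteq> x \<longrightarrow> u y < t"
      unfolding eventually_at_topological by auto
    with that show ?thesis
      by (intro exI[of _ T]) auto
  qed
  then have "open {x. u x < t}"
    by (subst open_subopen) blast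
  moreover have "- {x. t \<le> u x} = {x. u x < t}"
    by auto
  ultimately show ?thesis
    by (simp add: closed_def)
qed

lemma usc_on_UNIV_attains_max:
  assumes "usc_on UNIV u" "compact K" "K \<noteq> {}"
  obtains x0 where "x0 \<in> K" "\<And>x. x \<in> K \<Longrightarrow> u x \<le> u x0"
proof -
  have "K \<inter> (\<Inter>y\<in>K. {x. u y \<le> u x}) \<noteq> {}"
  proof (rule compact_imp_fip_image[OF \<open>compact K\<close>])
    show "closed {x. u y \<le> u x}" for y
      using usc_on_UNIV_closed_superlevel[OF assms(1)] .
    fix Y assume "finite Y" "Y \<subseteq> K"
    show "K \<inter> (\<Inter>y\<in>Y. {x. u y \<le> u x}) \<noteq> {}"
    proof (cases "Y = {}")
      case True
      then show ?thesis using \<open>K \<noteq> {}\<close> by simp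
    next
      case False
      have "Max (u ` Y) \<in> u ` Y"
        using \<open>finite Y\<close> False by simp
      then obtain y where "y \<in> Y" "u y = Max (u ` Y)"
        by (metis imageE)
      then have "\<forall>z\<in>Y. u z \<le> u y"
        using \<open>finite Y\<close> by simp
      with \<open>y \<in> Y\<close> \<open>Y \<subseteq> K\<close> show ?thesis
        by blast
    qed
  qed
  then obtain x0 where "x0 \<in> K" "\<forall>x\<in>K. u x \<le> u x0"
    by blast
  then show ?thesis
    using that by blast
qed

lemma trace_mult_scaleR: "trace ((A::real^'n^'n) ** (k *\<^sub>R X)) = k * trace (A ** X)"
  by (simp add: trace_def matrix_matrix_mult_def sum_distrib_left mult_ac)

lemma symmetric_mat_symmetric_part: "symmetric_mat ((1/2) *\<^sub>R (X + transpose X))"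
  by (simp add: symmetric_mat_def transpose_def vec_eq_iff)

lemma trace_mult_symmetric_part:
  fixes A X :: "real^'n^'n"
  assumes "symmetric_mat A"
  shows "trace (A ** ((1/2) *\<^sub>R (X + transpose X))) = trace (A ** X)"
proof -
  have "trace (A ** transpose X) = trace (transpose (A ** transpose X))"
    by (simp add: trace_def transpose_def)
  also have "\<dots> = trace (X ** A)"
    using assms by (simp add: matrix_transpose_mul symmetric_mat_def)
  also have "\<dots> = trace (A ** X)"
    by (rule trace_mul_sym)
  finally show ?thesis
    by (simp add: trace_mult_scaleR matrix_add_ldistrib trace_add)
qed

text \<open>Since \<open>a\<close> is symmetric, only the symmetric part of \<open>X\<close> enters the operator, so the
  boundedness hypothesis for symmetric \<open>X\<close> extends to all \<open>X\<close>; this is needed because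
  \<open>C2_test\<close> does not force the second derivative of a test function to be symmetric.\<close>

lemma bdd_below_operator_range:
  assumes a_sym: "\<forall>x \<alpha>. symmetric_mat (a x \<alpha>)"
    and F_finite: "\<forall>x t p X. symmetric_mat X \<longrightarrow>
        bdd_below (range (\<lambda>\<alpha>. - trace (a x \<alpha> ** X) - b x \<alpha> \<bullet> p + c x \<alpha> * t))"
  shows "bdd_below (range (\<lambda>\<alpha>. - trace (a x \<alpha> ** X) - b x \<alpha> \<bullet> p + c x \<alpha> * t))"
proof -
  have "bdd_below (range (\<lambda>\<alpha>. - trace (a x \<alpha> ** ((1/2) *\<^sub>R (X + transpose X)))
      - b x \<alpha> \<bullet> p + c x \<alpha> * t))"
    by (intro F_finite[rule_format] symmetric_mat_symmetric_part)
  then show ?thesis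
    by (simp add: trace_mult_symmetric_part a_sym)
qed

lemma Fop_nonneg_iff:
  assumes "bdd_below (range (\<lambda>\<alpha>. - trace (a x \<alpha> ** X) - b x \<alpha> \<bullet> p + c x \<alpha> * t))"
  shows "0 \<le> Fop a b c x t p X \<longleftrightarrow> (\<forall>\<alpha>. 0 \<le> - trace (a x \<alpha> ** X) - b x \<alpha> \<bullet> p + c x \<alpha> * t)"
  unfolding Fop_def using le_cINF_iff[OF UNIV_not_empty assms] by simp

lemma C2_test_affine:
  assumes "C2_test \<phi> D\<phi> D2\<phi>"
  shows "C2_test (\<lambda>y. e * (\<phi> y - M)) (\<lambda>y. e *\<^sub>R D\<phi> y) (\<lambda>y. e *\<^sub>R D2\<phi> y)"
  unfolding C2_test_def
proof (intro conjI allI)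
  fix x
  have "(\<phi> has_derivative (\<lambda>h. D\<phi> x \<bullet> h)) (at x)"
    using assms unfolding C2_test_def by blast
  then have "((\<lambda>y. e * (\<phi> y - M)) has_derivative (\<lambda>h. e * (D\<phi> x \<bullet> h - 0))) (at x)"
    by (intro derivative_intros) auto
  then show "((\<lambda>y. e * (\<phi> y - M)) has_derivative (\<lambda>h. e *\<^sub>R D\<phi> x \<bullet> h)) (at x)"
    by simp
  have "(D\<phi> has_derivative (\<lambda>h. D2\<phi> x *v h)) (at x)"
    using assms unfolding C2_test_def by blast
  then have "((\<lambda>y. e *\<^sub>R D\<phi> y) has_derivative (\<lambda>h. e *\<^sub>R (D2\<phi> x *v h))) (at x)"
    by (intro derivative_intros) auto
  then show "((\<lambda>y. e *\<^sub>R D\<phi> y) has_derivative (\<lambda>h. e *\<^sub>R D2\<phi> x *v h)) (at x)"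
    by (simp add: scaleR_matrix_vector_assoc)
  show "continuous_on UNIV (\<lambda>y. e *\<^sub>R D2\<phi> y)"
    using assms unfolding C2_test_def by (intro continuous_intros) auto
qed

lemma visc_subI:
  assumes "usc_on \<Omega> u"
    and "\<And>x0 \<phi> D\<phi> D2\<phi> r. x0 \<in> \<Omega> \<Longrightarrow> C2_test \<phi> D\<phi> D2\<phi> \<Longrightarrow> r > 0 \<Longrightarrow>
        \<forall>y\<in>\<Omega> \<inter> ball x0 r. u y - \<phi> y \<le> u x0 - \<phi> x0 \<Longrightarrow>
        Fop a b c x0 (u x0) (D\<phi> x0) (D2\<phi> x0) \<le> 0"
  shows "visc_sub a b c \<Omega> u"
  using assms unfolding visc_sub_def by blast

lemma visc_subD:
  assumes "visc_sub a b c \<Omega> u" "x0 \<in> \<Omega>" "C2_test \<phi> D\<phi> D2\<phi>" "r > 0"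
    and "\<forall>y\<in>\<Omega> \<inter> ball x0 r. u y - \<phi> y \<le> u x0 - \<phi> x0"
  shows "Fop a b c x0 (u x0) (D\<phi> x0) (D2\<phi> x0) \<le> 0"
  using assms unfolding visc_sub_def by blast

lemma visc_superI:
  assumes "lsc_on \<Omega> v"
    and "\<And>x0 \<phi> D\<phi> D2\<phi> r. x0 \<in> \<Omega> \<Longrightarrow> C2_test \<phi> D\<phi> D2\<phi> \<Longrightarrow> r > 0 \<Longrightarrow>
        \<forall>y\<in>\<Omega> \<inter> ball x0 r. v y - \<phi> y \<ge> v x0 - \<phi> x0 \<Longrightarrow>
        Fop a b c x0 (v x0) (D\<phi> x0) (D2\<phi> x0) \<ge> 0"
  shows "visc_super a b c \<Omega> v"
  using assms unfolding visc_super_def by blast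

lemma visc_superD:
  assumes "visc_super a b c \<Omega> v" "x0 \<in> \<Omega>" "C2_test \<phi> D\<phi> D2\<phi>" "r > 0"
    and "\<forall>y\<in>\<Omega> \<inter> ball x0 r. v y - \<phi> y \<ge> v x0 - \<phi> x0"
  shows "Fop a b c x0 (v x0) (D\<phi> x0) (D2\<phi> x0) \<ge> 0"
  using assms unfolding visc_super_def by blast

lemma visc_sub_restrict:
  assumes "visc_sub a b c U u" "open \<Omega>" "\<Omega> \<subseteq> U"
  shows "visc_sub a b c \<Omega> u"
proof (rule visc_subI)
  show "usc_on \<Omega> u"
    using assms usc_on_subset unfolding visc_sub_def by blast
  fix x0 \<phi> D\<phi> D2\<phi> r
  assume "x0 \<in> \<Omega>" "C2_test \<phi> D\<phi> D2\<phi>" "r > 0"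
    and max: "\<forall>y\<in>\<Omega> \<inter> ball x0 r. u y - \<phi> y \<le> u x0 - \<phi> x0"
  obtain r' where "r' > 0" "ball x0 r' \<subseteq> \<Omega>"
    using \<open>open \<Omega>\<close> \<open>x0 \<in> \<Omega>\<close> open_contains_ball by blast
  then have "\<forall>y\<in>U \<inter> ball x0 (min r r'). u y - \<phi> y \<le> u x0 - \<phi> x0"
    using max by auto
  then show "Fop a b c x0 (u x0) (D\<phi> x0) (D2\<phi> x0) \<le> 0"
    using assms(1,3) \<open>x0 \<in> \<Omega>\<close> \<open>C2_test \<phi> D\<phi> D2\<phi>\<close> \<open>r > 0\<close> \<open>r' > 0\<close>
    by (intro visc_subD[of a b c U u]) auto
qed

lemma visc_super_restrict:
  assumes "visc_super a b c U v" "open \<Omega>" "\<Omega> \<subseteq> U"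
  shows "visc_super a b c \<Omega> v"
proof (rule visc_superI)
  show "lsc_on \<Omega> v"
    using assms lsc_on_subset unfolding visc_super_def by blast
  fix x0 \<phi> D\<phi> D2\<phi> r
  assume "x0 \<in> \<Omega>" "C2_test \<phi> D\<phi> D2\<phi>" "r > 0"
    and min: "\<forall>y\<in>\<Omega> \<inter> ball x0 r. v y - \<phi> y \<ge> v x0 - \<phi> x0"
  obtain r' where "r' > 0" "ball x0 r' \<subseteq> \<Omega>"
    using \<open>open \<Omega>\<close> \<open>x0 \<in> \<Omega>\<close> open_contains_ball by blast
  then have "\<forall>y\<in>U \<inter> ball x0 (min r r'). v y - \<phi> y \<ge> v x0 - \<phi> x0"
    using min by auto
  then show "Fop a b c x0 (v x0) (D\<phi> x0) (D2\<phi> x0) \<ge> 0"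
    using assms(1,3) \<open>x0 \<in> \<Omega>\<close> \<open>C2_test \<phi> D\<phi> D2\<phi>\<close> \<open>r > 0\<close> \<open>r' > 0\<close>
    by (intro visc_superD[of a b c U v]) auto
qed

lemma visc_sub_diff_const:
  assumes "\<forall>x \<alpha>. c x \<alpha> = 0" "visc_sub a b c \<Omega> u"
  shows "visc_sub a b c \<Omega> (\<lambda>x. u x - k)"
proof (rule visc_subI)
  show "usc_on \<Omega> (\<lambda>x. u x - k)"
    using assms(2) unfolding visc_sub_def usc_on_def by simp
  fix x0 \<phi> D\<phi> D2\<phi> r
  assume "x0 \<in> \<Omega>" "C2_test \<phi> D\<phi> D2\<phi>" "r > 0"
    and "\<forall>y\<in>\<Omega> \<inter> ball x0 r. u y - k - \<phi> y \<le> u x0 - k - \<phi> x0"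
  then have "Fop a b c x0 (u x0) (D\<phi> x0) (D2\<phi> x0) \<le> 0"
    by (intro visc_subD[OF assms(2)]) auto
  then show "Fop a b c x0 (u x0 - k) (D\<phi> x0) (D2\<phi> x0) \<le> 0"
    using assms(1) by (simp add: Fop_def)
qed

lemma visc_super_affine:
  assumes a_sym: "\<forall>x \<alpha>. symmetric_mat (a x \<alpha>)"
    and F_finite: "\<forall>x t p X. symmetric_mat X \<longrightarrow>
        bdd_below (range (\<lambda>\<alpha>. - trace (a x \<alpha> ** X) - b x \<alpha> \<bullet> p + c x \<alpha> * t))"
    and cM: "\<forall>x \<alpha>. 0 \<le> c x \<alpha> * M"
    and "\<epsilon> > 0"
    and w_super: "visc_super a b c \<Omega> w"
  shows "visc_super a b c \<Omega> (\<lambda>x. M + \<epsilon> * w x)"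
proof (rule visc_superI)
  show "lsc_on \<Omega> (\<lambda>x. M + \<epsilon> * w x)"
    using w_super lsc_on_affine \<open>\<epsilon> > 0\<close> unfolding visc_super_def by blast
  fix x0 \<phi> D\<phi> D2\<phi> r
  assume "x0 \<in> \<Omega>" "C2_test \<phi> D\<phi> D2\<phi>" "r > 0"
    and min: "\<forall>y\<in>\<Omega> \<inter> ball x0 r. M + \<epsilon> * w y - \<phi> y \<ge> M + \<epsilon> * w x0 - \<phi> x0"
  define e where "e = 1 / \<epsilon>"
  have "e > 0"
    using \<open>\<epsilon> > 0\<close> by (simp add: e_def)
  have "w y - e * (\<phi> y - M) = e * (M + \<epsilon> * w y - \<phi> y)" for y
    using \<open>\<epsilon> > 0\<close> unfolding e_def by (simp add: field_simps)
  then have "\<forall>y\<in>\<Omega> \<inter> ball x0 r. w y - e * (\<phi> y - M) \<ge> w x0 - e * (\<phi> x0 - M)"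
    using min \<open>e > 0\<close> by (simp add: mult_left_mono)
  then have "0 \<le> Fop a b c x0 (w x0) (e *\<^sub>R D\<phi> x0) (e *\<^sub>R D2\<phi> x0)"
    using visc_superD[OF w_super \<open>x0 \<in> \<Omega>\<close> C2_test_affine[OF \<open>C2_test \<phi> D\<phi> D2\<phi>\<close>] \<open>r > 0\<close>]
    by simp
  moreover have bdd: "bdd_below (range (\<lambda>\<alpha>. - trace (a x \<alpha> ** X) - b x \<alpha> \<bullet> p + c x \<alpha> * t))"
    for x t p X
    using bdd_below_operator_range[OF a_sym F_finite] .
  ultimately have scaled:
    "0 \<le> - trace (a x0 \<alpha> ** (e *\<^sub>R D2\<phi> x0)) - b x0 \<alpha> \<bullet> (e *\<^sub>R D\<phi> x0) + c x0 \<alpha> * w x0" for \<alpha>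
    unfolding Fop_nonneg_iff[OF bdd] by blast
  have "0 \<le> - trace (a x0 \<alpha> ** D2\<phi> x0) - b x0 \<alpha> \<bullet> D\<phi> x0 + c x0 \<alpha> * (M + \<epsilon> * w x0)" for \<alpha>
  proof -
    have "- trace (a x0 \<alpha> ** D2\<phi> x0) - b x0 \<alpha> \<bullet> D\<phi> x0 + c x0 \<alpha> * (M + \<epsilon> * w x0)
        = \<epsilon> * (- trace (a x0 \<alpha> ** (e *\<^sub>R D2\<phi> x0)) - b x0 \<alpha> \<bullet> (e *\<^sub>R D\<phi> x0) + c x0 \<alpha> * w x0)
          + c x0 \<alpha> * M"
      using \<open>\<epsilon> > 0\<close> unfolding e_def by (simp add: trace_mult_scaleR field_simps)
    then show ?thesis
      using scaled[of \<alpha>] cM \<open>\<epsilon> > 0\<close> by simp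
  qed
  then show "Fop a b c x0 (M + \<epsilon> * w x0) (D\<phi> x0) (D2\<phi> x0) \<ge> 0"
    unfolding Fop_nonneg_iff[OF bdd] by blast
qed

definition comparison_principle ::
    "(real^'n \<Rightarrow> 'a \<Rightarrow> real^'n^'n) \<Rightarrow> (real^'n \<Rightarrow> 'a \<Rightarrow> real^'n) \<Rightarrow> (real^'n \<Rightarrow> 'a \<Rightarrow> real) \<Rightarrow> bool"
  where "comparison_principle a b c \<longleftrightarrow> (\<forall>\<Omega> u v. open \<Omega> \<and> bounded \<Omega> \<and>
        visc_sub a b c \<Omega> u \<and> visc_super a b c \<Omega> v \<and>
        usc_on (closure \<Omega>) u \<and> lsc_on (closure \<Omega>) v \<and>
        (\<forall>x\<in>frontier \<Omega>. u x \<le> v x) \<longrightarrow> (\<forall>x\<in>\<Omega>. u x \<le> v x))"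

definition strong_maximum_principle ::
    "(real^'n \<Rightarrow> 'a \<Rightarrow> real^'n^'n) \<Rightarrow> (real^'n \<Rightarrow> 'a \<Rightarrow> real^'n) \<Rightarrow> (real^'n \<Rightarrow> 'a \<Rightarrow> real) \<Rightarrow> bool"
  where "strong_maximum_principle a b c \<longleftrightarrow> (\<forall>u. visc_sub a b c UNIV u \<and>
        (\<exists>x0. u x0 \<ge> 0 \<and> (\<forall>x. u x \<le> u x0)) \<longrightarrow> (\<exists>k. \<forall>x. u x = k))"

lemma comparison_principleD:
  assumes "comparison_principle a b c" "open \<Omega>" "bounded \<Omega>"
    and "visc_sub a b c \<Omega> u" "visc_super a b c \<Omega> v"
    and "usc_on (closure \<Omega>) u" "lsc_on (closure \<Omega>) v"
    and "\<forall>x\<in>frontier \<Omega>. u x \<le> v x" "x \<in> \<Omega>"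
  shows "u x \<le> v x"
  using assms(1)[unfolded comparison_principle_def, rule_format, of \<Omega> u v] assms(2-) by blast

lemma strong_maximum_principleD:
  assumes "strong_maximum_principle a b c" "visc_sub a b c UNIV u"
    and "0 \<le> u x0" "\<forall>x. u x \<le> u x0"
  shows "\<exists>k. \<forall>x. u x = k"
  using assms(1)[unfolded strong_maximum_principle_def, rule_format, of u] assms(2-) by blast

lemma eventually_le_add_scaled:
  fixes u w :: "'a \<Rightarrow> real"
  assumes w_infty: "filterlim w at_top F"
    and growth: "Limsup F (\<lambda>x. ereal (u x / w x)) \<le> 0"
    and "\<epsilon> > 0"
  shows "eventually (\<lambda>x. u x \<le> M + \<epsilon> * w x) F"
proof -
  have "Limsup F (\<lambda>x. ereal (u x / w x)) < ereal (\<epsilon> / 2)"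
    using growth \<open>\<epsilon> > 0\<close> by (simp add: le_less_trans)
  then have "eventually (\<lambda>x. u x / w x < \<epsilon> / 2) F"
    by (auto dest: Limsup_lessD)
  moreover have "eventually (\<lambda>x. 2 * \<bar>M\<bar> / \<epsilon> < w x) F"
    using w_infty by (simp add: filterlim_at_top_dense)
  ultimately show ?thesis
  proof eventually_elim
    case (elim x)
    moreover have "0 \<le> 2 * \<bar>M\<bar> / \<epsilon>"
      using \<open>\<epsilon> > 0\<close> by simp
    ultimately have "0 < w x"
      by linarith
    then have "u x < \<epsilon> / 2 * w x" and "2 * \<bar>M\<bar> < \<epsilon> * w x"
      using elim \<open>\<epsilon> > 0\<close> by (simp_all add: divide_less_eq mult.commute)
    then show ?case
      by linarith
  qed
qed

lemma comparison_outside_ball: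
  fixes u v :: "real^'n \<Rightarrow> real"
  assumes comparison: "comparison_principle a b c"
    and u_sub: "visc_sub a b c UNIV u"
    and v_super: "visc_super a b c {x. R < norm x} v" and v_lsc: "lsc_on UNIV v"
    and on_sphere: "\<And>y. norm y = R \<Longrightarrow> u y \<le> v y"
    and near_infinity: "eventually (\<lambda>y. u y \<le> v y) at_infinity"
    and "R \<le> norm x"
  shows "u x \<le> v x"
proof -
  obtain S where far: "\<And>y. S \<le> norm y \<Longrightarrow> u y \<le> v y"
    using near_infinity unfolding eventually_at_infinity by blast
  define R' where "R' = max S R + 1"
  define \<Omega> where "\<Omega> = {x::real^'n. R < norm x \<and> norm x < R'}"
  have "open \<Omega>"
    unfolding \<Omega>_def by (intro open_Collect_conj open_Collect_less continuous_intros)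
  have "bounded \<Omega>"
    unfolding \<Omega>_def by (rule bounded_subset[of "cball 0 R'"]) auto
  have "closure \<Omega> \<subseteq> {x. R \<le> norm x \<and> norm x \<le> R'}"
    unfolding \<Omega>_def by (intro closure_minimal closed_Collect_conj closed_Collect_le continuous_intros) auto
  then have "norm y = R \<or> norm y = R'" if "y \<in> frontier \<Omega>" for y
    using that \<open>open \<Omega>\<close> unfolding \<Omega>_def by (auto simp: frontier_def interior_open)
  then have "\<forall>y\<in>frontier \<Omega>. u y \<le> v y"
    using on_sphere far unfolding R'_def by (metis max.cobounded1 add_increasing2 zero_le_one)
  moreover have "visc_sub a b c \<Omega> u" "visc_super a b c \<Omega> v"
    using visc_sub_restrict[OF u_sub] visc_super_restrict[OF v_super] \<open>open \<Omega>\<close>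
    unfolding \<Omega>_def by auto
  moreover have "usc_on (closure \<Omega>) u" "lsc_on (closure \<Omega>) v"
    using u_sub usc_on_subset lsc_on_subset[OF v_lsc] unfolding visc_sub_def by auto
  ultimately have "u y \<le> v y" if "y \<in> \<Omega>" for y
    using comparison_principleD[OF comparison \<open>open \<Omega>\<close> \<open>bounded \<Omega>\<close>] that by blast
  moreover consider "norm x = R" | "x \<in> \<Omega>" | "S \<le> norm x"
    using \<open>R \<le> norm x\<close> unfolding \<Omega>_def R'_def by fastforce
  ultimately show ?thesis
    using on_sphere far by metis
qed

lemma le_max_on_ball:
  assumes comparison: "comparison_principle a b c"
    and u_sub: "visc_sub a b c UNIV u" and w_lsc: "lsc_on UNIV w"
    and super: "\<And>\<epsilon>. \<epsilon> > 0 \<Longrightarrow> visc_super a b c {x. R < norm x} (\<lambda>x. M + \<epsilon> * w x)"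
    and w_pos: "\<And>y. R \<le> norm y \<Longrightarrow> 0 < w y"
    and growth: "\<And>\<epsilon>. \<epsilon> > 0 \<Longrightarrow> eventually (\<lambda>y. u y \<le> M + \<epsilon> * w y) at_infinity"
    and in_ball: "\<And>y. norm y \<le> R \<Longrightarrow> u y \<le> M"
  shows "u x \<le> M"
proof (cases "norm x \<le> R")
  case True
  then show ?thesis by (rule in_ball)
next
  case False
  have bound: "u x \<le> M + \<epsilon> * w x" if "\<epsilon> > 0" for \<epsilon>
  proof (rule comparison_outside_ball[OF comparison u_sub super[OF that]])
    show "lsc_on UNIV (\<lambda>x. M + \<epsilon> * w x)"
      using lsc_on_affine[OF w_lsc that] .
    show "u y \<le> M + \<epsilon> * w y" if "norm y = R" for y
      using in_ball[of y] w_pos[of y] \<open>\<epsilon> > 0\<close> that by (simp add: add_increasing2)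
  qed (use growth[OF that] False in auto)
  have "0 < w x"
    using w_pos False by simp
  then have "u x \<le> M + \<delta>" if "\<delta> > 0" for \<delta>
    using bound[of "\<delta> / w x"] that by simp
  then show ?thesis
    by (rule field_le_epsilon)
qed

lemma constant_if_attains_max:
  assumes "strong_maximum_principle a b c" "visc_sub a b c UNIV u"
    and "\<forall>x. u x \<le> u x0" "0 \<le> u x0 \<or> (\<forall>x \<alpha>. c x \<alpha> = 0)"
  shows "\<exists>k. \<forall>x. u x = k"
  using assms(4)
proof
  assume "0 \<le> u x0"
  then show ?thesis
    using strong_maximum_principleD assms(1-3) by blast
next
  assume "\<forall>x \<alpha>. c x \<alpha> = 0"
  then have "visc_sub a b c UNIV (\<lambda>x. u x - u x0)"
    using visc_sub_diff_const assms(2) by blast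
  then obtain k where "\<forall>x. u x - u x0 = k"
    using strong_maximum_principleD[OF assms(1), of "\<lambda>x. u x - u x0" x0] assms(3) by auto
  then show ?thesis
    by (metis diff_add_cancel)
qed

theorem theorem2p1:
  fixes a :: "real^'n \<Rightarrow> 'a::metric_space \<Rightarrow> real^'n^'n"
    and b :: "real^'n \<Rightarrow> 'a \<Rightarrow> real^'n"
    and c :: "real^'n \<Rightarrow> 'a \<Rightarrow> real"
    and u w :: "real^'n \<Rightarrow> real"
    and R\<^sub>o :: real
  assumes a_sym: "\<forall>x \<alpha>. symmetric_mat (a x \<alpha>)"
    and a_cont: "continuous_on UNIV (\<lambda>(x, \<alpha>). a x \<alpha>)"
    and b_cont: "continuous_on UNIV (\<lambda>(x, \<alpha>). b x \<alpha>)"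
    and c_cont: "continuous_on UNIV (\<lambda>(x, \<alpha>). c x \<alpha>)"
    and F_finite: "\<forall>x t p X. symmetric_mat X \<longrightarrow>
        bdd_below (range (\<lambda>\<alpha>. - trace (a x \<alpha> ** X) - b x \<alpha> \<bullet> p + c x \<alpha> * t))"
    and F_cont: "continuous_on (UNIV \<times> UNIV \<times> UNIV \<times> {X. symmetric_mat X})
        (\<lambda>(x, t, p, X). Fop a b c x t p X)"
    and c_nonneg: "\<forall>x \<alpha>. c x \<alpha> \<ge> 0"
    and comparison: "\<forall>\<Omega> u v. open \<Omega> \<and> bounded \<Omega> \<and>
        visc_sub a b c \<Omega> u \<and> visc_super a b c \<Omega> v \<and>
        usc_on (closure \<Omega>) u \<and> lsc_on (closure \<Omega>) v \<and>
        (\<forall>x\<in>frontier \<Omega>. u x \<le> v x) \<longrightarrow> (\<forall>x\<in>\<Omega>. u x \<le> v x)"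
    and strong_max: "\<forall>u. visc_sub a b c UNIV u \<and>
        (\<exists>x0. u x0 \<ge> 0 \<and> (\<forall>x. u x \<le> u x0)) \<longrightarrow> (\<exists>k. \<forall>x. u x = k)"
    and R_nonneg: "R\<^sub>o \<ge> 0"
    and w_lsc: "lsc_on UNIV w"
    and w_super: "visc_super a b c {x. norm x > R\<^sub>o} w"
    and w_infty: "filterlim w at_top at_infinity"
    and u_growth: "Limsup at_infinity (\<lambda>x. ereal (u x / w x)) \<le> 0"
    and u_usc: "usc_on UNIV u"
    and u_sub: "visc_sub a b c UNIV u"
    and alt: "(\<forall>x. u x \<ge> 0) \<or> (\<forall>x \<alpha>. c x \<alpha> = 0)"
  shows "\<exists>k. \<forall>x. u x = k"
proof -
  obtain B where B: "\<And>y. B \<le> norm y \<Longrightarrow> 0 < w y"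
    using w_infty unfolding filterlim_at_top_dense eventually_at_infinity by blast
  define R where "R = max B R\<^sub>o"
  have "cball 0 R \<noteq> {}"
    using R_nonneg unfolding R_def by simp
  then obtain x0 where max: "\<And>y. y \<in> cball 0 R \<Longrightarrow> u y \<le> u x0"
    using usc_on_UNIV_attains_max[OF u_usc compact_cball] by blast
  have "open {x::real^'n. R < norm x}"
    by (intro open_Collect_less continuous_intros)
  moreover have "{x. R < norm x} \<subseteq> {x. norm x > R\<^sub>o}"
    unfolding R_def by auto
  ultimately have "visc_super a b c {x. R < norm x} w"
    by (rule visc_super_restrict[OF w_super])
  moreover have "\<forall>x \<alpha>. 0 \<le> c x \<alpha> * u x0"
    using alt c_nonneg by auto
  ultimately have super: "visc_super a b c {x. R < norm x} (\<lambda>x. u x0 + \<epsilon> * w x)"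
    if "\<epsilon> > 0" for \<epsilon>
    using visc_super_affine[OF a_sym F_finite _ that] by blast
  have "u x \<le> u x0" for x
  proof (rule le_max_on_ball[OF comparison[folded comparison_principle_def] u_sub w_lsc super])
    show "0 < w y" if "R \<le> norm y" for y
      using B that unfolding R_def by simp
    show "eventually (\<lambda>y. u y \<le> u x0 + \<epsilon> * w y) at_infinity" if "\<epsilon> > 0" for \<epsilon>
      using eventually_le_add_scaled[OF w_infty u_growth that] .
    show "u y \<le> u x0" if "norm y \<le> R" for y
      using max that by simp
  qed
  moreover have "0 \<le> u x0 \<or> (\<forall>x \<alpha>. c x \<alpha> = 0)"
    using alt by blast
  ultimately show ?thesis
    using constant_if_attains_max[OF strong_max[folded strong_maximum_principle_def] u_sub]
    by blast
qed

end
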